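(* Pseudo-rotations are generic in $\overline{\mathcal{O}}^{\infty}(\mathbb{T}^2)$ and in $\overline{\mathcal{O}_\mu}^{\infty}(\mathbb{T}^2)$.
   Context: $\overline{\mathcal{O}}^{\infty}(\mathbb{T}^2)$ is the $C^\infty$-closure of $\{h\circ R_\theta\circ h^{-1}: h\in\mathrm{Diff}^\infty(\mathbb{T}^2),\theta\in\mathbb{T}^2\}$ where $R_\theta(x)=x+\theta$ on $\mathbb{T}^2=\mathbb{R}^2/\mathbb{Z}^2$, with the $C^\infty$ metric; $\overline{\mathcal{O}_\mu}^{\infty}(\mathbb{T}^2)$ is the same with $h$ area-preserving. Generic means holding on a countable intersection of open dense subsets. For $f$ a torus homeomorphism homotopic to the identity with lift $\tilde f$, its rotation set is $\rho(\tilde f)=\lim_{n\to\infty}\tilde f^n(D)/n$ (Hausdorff limit, $D$ a fundamental domain of $\mathbb{Z}^2$); $f$ is a pseudo-rotation if its rotation set is a single vector. *)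

theory Defs
  imports "HOL-Analysis.Analysis"
begin

typedef torus = "{x :: real^2. \<forall>i. 0 \<le> x $ i \<and> x $ i < 1}"
  by (rule exI[of _ 0]) simp

definition proj :: "real^2 \<Rightarrow> torus" where
  "proj x = Abs_torus (\<chi> i. frac (x $ i))"

definition lattice :: "(real^2) set" where
  "lattice = {k. \<forall>i. k $ i \<in> \<int>}"

definition rot :: "real^2 \<Rightarrow> torus \<Rightarrow> torus" where
  "rot \<theta> p = proj (Rep_torus p + \<theta>)"

definition tdist :: "torus \<Rightarrow> torus \<Rightarrow> real" where
  "tdist p q = Inf {norm (x - y) | x y. proj x = p \<and> proj y = q}"

text \<open>pd ds F is the iterated partial derivative along the coordinate
  directions listed in ds (innermost derivative last in the list).\<close>
fun pd :: "2 list \<Rightarrow> (real^2 \<Rightarrow> real^2) \<Rightarrow> real^2 \<Rightarrow> real^2" where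
  "pd [] F = F"
| "pd (i # ds) F = (\<lambda>x. vector_derivative (\<lambda>t. pd ds F (x + t *\<^sub>R axis i 1)) (at 0))"

definition smooth :: "(real^2 \<Rightarrow> real^2) \<Rightarrow> bool" where
  "smooth F \<longleftrightarrow> (\<forall>ds. continuous_on UNIV (pd ds F)) \<and>
     (\<forall>ds i x. (\<lambda>t. pd ds F (x + t *\<^sub>R axis i 1)) differentiable (at 0))"

definition is_lift :: "(real^2 \<Rightarrow> real^2) \<Rightarrow> (torus \<Rightarrow> torus) \<Rightarrow> bool" where
  "is_lift F f \<longleftrightarrow> (\<forall>x. proj (F x) = f (proj x))"

definition smooth_tmap :: "(torus \<Rightarrow> torus) \<Rightarrow> bool" where
  "smooth_tmap f \<longleftrightarrow> (\<exists>F. smooth F \<and> is_lift F f)"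

definition Diff :: "(torus \<Rightarrow> torus) set" where
  "Diff = {f. bij f \<and> smooth_tmap f \<and> smooth_tmap (inv f)}"

text \<open>A chosen smooth lift (all smooth lifts differ by a constant in Z^2,
  so derivatives of order >= 1 do not depend on the choice).\<close>
definition lift :: "(torus \<Rightarrow> torus) \<Rightarrow> real^2 \<Rightarrow> real^2" where
  "lift f = (SOME F. smooth F \<and> is_lift F f)"

definition jac :: "(real^2 \<Rightarrow> real^2) \<Rightarrow> real^2 \<Rightarrow> real^2^2" where
  "jac F x = (\<chi> i j. pd [j] F x $ i)"

definition Diff_mu :: "(torus \<Rightarrow> torus) set" where
  "Diff_mu = {h \<in> Diff. \<forall>x. \<bar>det (jac (lift h) x)\<bar> = 1}"

definition dk :: "nat \<Rightarrow> (torus \<Rightarrow> torus) \<Rightarrow> (torus \<Rightarrow> torus) \<Rightarrow> real" where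
  "dk k f g = Sup ({Sup (range (\<lambda>p. tdist (f p) (g p)))} \<union>
      {Sup (range (\<lambda>x. norm (pd ds (lift f) x - pd ds (lift g) x))) | ds.
          1 \<le> length ds \<and> length ds \<le> k})"

definition dCk :: "nat \<Rightarrow> (torus \<Rightarrow> torus) \<Rightarrow> (torus \<Rightarrow> torus) \<Rightarrow> real" where
  "dCk k f g = max (dk k f g) (dk k (inv f) (inv g))"

definition dinf :: "(torus \<Rightarrow> torus) \<Rightarrow> (torus \<Rightarrow> torus) \<Rightarrow> real" where
  "dinf f g = (\<Sum>k. (1/2) ^ k * min 1 (dCk k f g))"

definition dinf_open :: "(torus \<Rightarrow> torus) set \<Rightarrow> bool" where
  "dinf_open U \<longleftrightarrow> U \<subseteq> Diff \<and>
     (\<forall>f\<in>U. \<exists>r>0. \<forall>g\<in>Diff. dinf f g < r \<longrightarrow> g \<in> U)"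

lemma istopology_dinf_open: "istopology dinf_open"
  unfolding istopology_def
proof (rule conjI; intro allI impI)
  fix S T assume S: "dinf_open S" and T: "dinf_open T"
  show "dinf_open (S \<inter> T)"
    unfolding dinf_open_def
  proof (intro conjI ballI)
    show "S \<inter> T \<subseteq> Diff" using S unfolding dinf_open_def by blast
  next
    fix f assume f: "f \<in> S \<inter> T"
    obtain r1 where r1: "r1 > 0" "\<forall>g\<in>Diff. dinf f g < r1 \<longrightarrow> g \<in> S"
      using f S unfolding dinf_open_def by blast
    obtain r2 where r2: "r2 > 0" "\<forall>g\<in>Diff. dinf f g < r2 \<longrightarrow> g \<in> T"
      using f T unfolding dinf_open_def by blast
    show "\<exists>r>0. \<forall>g\<in>Diff. dinf f g < r \<longrightarrow> g \<in> S \<inter> T"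
      using r1 r2 by (intro exI[of _ "min r1 r2"]) auto
  qed
next
  fix K assume K: "\<forall>S\<in>K. dinf_open S"
  show "dinf_open (\<Union>K)"
    unfolding dinf_open_def
  proof (intro conjI ballI)
    show "\<Union>K \<subseteq> Diff" using K unfolding dinf_open_def by blast
  next
    fix f assume "f \<in> \<Union>K"
    then obtain S where "S \<in> K" "f \<in> S" by blast
    then obtain r where "r > 0" "\<forall>g\<in>Diff. dinf f g < r \<longrightarrow> g \<in> S"
      using K unfolding dinf_open_def by blast
    then show "\<exists>r>0. \<forall>g\<in>Diff. dinf f g < r \<longrightarrow> g \<in> \<Union>K"
      using \<open>S \<in> K\<close> by blast
  qed
qed

definition Diff_top :: "(torus \<Rightarrow> torus) topology" where
  "Diff_top = topology dinf_open"

definition O_closure :: "(torus \<Rightarrow> torus) set" where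
  "O_closure = Diff_top closure_of {h \<circ> rot \<theta> \<circ> inv h | h \<theta>. h \<in> Diff}"

definition O_mu_closure :: "(torus \<Rightarrow> torus) set" where
  "O_mu_closure = Diff_top closure_of {h \<circ> rot \<theta> \<circ> inv h | h \<theta>. h \<in> Diff_mu}"

definition hausdorff_dist :: "(real^2) set \<Rightarrow> (real^2) set \<Rightarrow> real" where
  "hausdorff_dist A B = max (SUP a\<in>A. infdist a B) (SUP b\<in>B. infdist b A)"

definition fund_dom :: "(real^2) set" where
  "fund_dom = cbox 0 1"

definition rotation_set :: "(real^2 \<Rightarrow> real^2) \<Rightarrow> (real^2) set" where
  "rotation_set F = (THE R. compact R \<and> R \<noteq> {} \<and>
     (\<lambda>n. hausdorff_dist ((\<lambda>x. (1 / real n) *\<^sub>R x) ` ((F ^^ n) ` fund_dom)) R)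
        \<longlonglongrightarrow> 0)"

text \<open>f is a homeomorphism homotopic to the identity (i.e. has a continuous lift
  commuting with the integer translations), and the rotation set of such a lift
  is a single vector.\<close>
definition pseudo_rotation :: "(torus \<Rightarrow> torus) \<Rightarrow> bool" where
  "pseudo_rotation f \<longleftrightarrow> bij f \<and>
     (\<exists>F. continuous_on UNIV F \<and> is_lift F f \<and>
        (\<forall>x k. k \<in> lattice \<longrightarrow> F (x + k) = F x + k) \<and>
        (\<exists>v. rotation_set F = {v}))"

definition generic_in :: "'a topology \<Rightarrow> ('a \<Rightarrow> bool) \<Rightarrow> bool" where
  "generic_in X P \<longleftrightarrow> (\<exists>U :: nat \<Rightarrow> 'a set.
      (\<forall>n. openin X (U n) \<and> X closure_of (U n) = topspace X) \<and>
      (\<Inter>n. U n) \<subseteq> {x. P x})"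

end

theory Submission imports Defs begin

(* Let F be a lift of f. If for every e > 0 some iterate F^m lies uniformly within e m of a
   translation, then (F^N x - x) / N converges uniformly in x, so the rotation set is a single
   vector. For a conjugate h R_theta h^-1 the lift H (K x + theta), with H and K lifts of h and
   h^-1, has iterates H (K x + u); since H is additive up to a bounded error, these stay within a
   distance of translations that does not depend on m. For one fixed m this survives C^0-small
   perturbations, and the C^infinity topology is finer than the C^0 one. So for every n the maps
   with e = 1/(n+1) contain an open set containing all conjugates, which is dense in their
   closure, and the intersection over n consists of pseudo-rotations. *)

lemma lattice_diff [intro]: "a \<in> lattice \<Longrightarrow> b \<in> lattice \<Longrightarrow> a - b \<in> lattice"
  by (simp add: lattice_def)

lemma lattice_uminus [intro]: "a \<in> lattice \<Longrightarrow> - a \<in> lattice"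
  by (simp add: lattice_def)

lemma lattice_scaleR_of_nat [intro]: "a \<in> lattice \<Longrightarrow> real m *\<^sub>R a \<in> lattice"
  by (simp add: lattice_def)

lemma lattice_norm_less_1_eq_0:
  assumes "k \<in> lattice" "norm k < 1"
  shows "k = 0"
proof (rule ccontr)
  assume "k \<noteq> 0"
  then obtain i where "k $ i \<noteq> 0" by (auto simp: vec_eq_iff)
  moreover have "k $ i \<in> \<int>" using assms(1) by (simp add: lattice_def)
  ultimately have "1 \<le> \<bar>k $ i\<bar>" by (auto elim!: Ints_cases)
  then show False using component_le_norm_cart[of k i] assms(2) by linarith
qed

lemma frac_eq_iff: "frac (x :: real) = frac y \<longleftrightarrow> x - y \<in> \<int>"
  by (metis frac_diff_eq frac_diff_zero frac_eq_0_iff)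

lemma proj_eq_iff: "proj x = proj y \<longleftrightarrow> x - y \<in> lattice"
proof -
  have "proj x = proj y \<longleftrightarrow> (\<chi> i. frac (x $ i)) = (\<chi> i. frac (y $ i))"
    unfolding proj_def by (rule Abs_torus_inject) (auto simp: frac_lt_1)
  also have "\<dots> \<longleftrightarrow> x - y \<in> lattice"
    by (simp add: vec_eq_iff lattice_def frac_eq_iff)
  finally show ?thesis .
qed

lemma proj_add_lattice: "k \<in> lattice \<Longrightarrow> proj (x + k) = proj x"
  by (simp add: proj_eq_iff)

lemma proj_Rep_torus: "proj (Rep_torus p) = p"
proof -
  have "(\<chi> i. frac (Rep_torus p $ i)) = Rep_torus p"
    using Rep_torus[of p] by (simp add: vec_eq_iff frac_unique_iff)
  then show ?thesis unfolding proj_def by (simp add: Rep_torus_inverse)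
qed

lemma rot_proj: "rot \<theta> (proj y) = proj (y + \<theta>)"
proof -
  have "Rep_torus (proj y) - y \<in> lattice"
    using proj_Rep_torus[of "proj y"] by (simp add: proj_eq_iff)
  then show ?thesis unfolding rot_def by (simp add: proj_eq_iff)
qed

lemma norm_le_2_if_in_unit_cube:
  fixes x :: "real^2"
  assumes "x \<in> cbox 0 1"
  shows "norm x \<le> 2"
proof -
  have "\<bar>x $ 1\<bar> \<le> 1" "\<bar>x $ 2\<bar> \<le> 1"
    using assms by (auto simp: mem_box_cart)
  then show ?thesis
    using norm_le_l1_cart[of x] by (simp add: sum_2)
qed

lemma lattice_translate_into_unit_cube:
  obtains k where "k \<in> lattice" "x - k \<in> cbox 0 1"
proof
  show "(\<chi> i. of_int \<lfloor>x $ i\<rfloor>) \<in> lattice" by (simp add: lattice_def)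
  show "x - (\<chi> i. of_int \<lfloor>x $ i\<rfloor>) \<in> cbox 0 1"
    by (simp add: mem_box_cart) linarith
qed

lemma lattice_near_constant:
  fixes d :: "'a::real_normed_vector \<Rightarrow> real^2"
  assumes cont: "continuous_on UNIV d" and r: "r \<le> 1/2"
    and near: "\<And>z. \<exists>k\<in>lattice. norm (d z - k) < r"
  shows "\<exists>k\<in>lattice. \<forall>z. norm (d z - k) < r"
proof -
  obtain k0 where k0: "k0 \<in> lattice" "norm (d 0 - k0) < r" using near[of 0] by blast
  define ball_at where "ball_at k = {z. norm (d z - k) < r}" for k
  define S where "S = ball_at k0"
  define T where "T = (\<Union>k\<in>lattice - {k0}. ball_at k)"
  have open_ball_at: "open (ball_at k)" for k
    unfolding ball_at_def by (intro open_Collect_less continuous_intros cont)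
  have "S \<inter> T = {}"
  proof (rule ccontr)
    assume "S \<inter> T \<noteq> {}"
    then obtain z k where z: "norm (d z - k0) < r" "k \<in> lattice" "k \<noteq> k0" "norm (d z - k) < r"
      unfolding S_def T_def ball_at_def by blast
    have "norm (k - k0) \<le> norm (d z - k) + norm (d z - k0)"
      using norm_triangle_ineq4[of "d z - k0" "d z - k"] by simp
    then have "k - k0 = 0" using z r k0 by (intro lattice_norm_less_1_eq_0) auto
    then show False using z by simp
  qed
  moreover have "UNIV \<subseteq> S \<union> T"
    using near unfolding S_def T_def ball_at_def by fastforce
  moreover have "0 \<in> S" using k0 unfolding S_def ball_at_def by simp
  moreover have "open S" "open T"
    using open_ball_at unfolding S_def T_def by auto
  ultimately have "T = {}"
    using connected_UNIV[unfolded connected_def] by blast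
  then show ?thesis
    using \<open>UNIV \<subseteq> S \<union> T\<close> k0 unfolding S_def ball_at_def by blast
qed

lemma lattice_valued_constant:
  fixes d :: "'a::real_normed_vector \<Rightarrow> real^2"
  assumes cont: "continuous_on UNIV d" and lat: "\<And>z. d z \<in> lattice"
  shows "\<exists>k\<in>lattice. \<forall>z. d z = k"
proof -
  have "\<exists>k\<in>lattice. norm (d z - k) < 1/2" for z
    using lat[of z] by (intro bexI[of _ "d z"]) auto
  then obtain k where k: "k \<in> lattice" "\<And>z. norm (d z - k) < 1/2"
    using lattice_near_constant[OF cont, of "1/2"] by auto
  have "d z - k = 0" for z
  proof (rule lattice_norm_less_1_eq_0)
    show "d z - k \<in> lattice" using lat k(1) by blast
    show "norm (d z - k) < 1" using k(2)[of z] by linarith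
  qed
  then show ?thesis using k(1) by auto
qed

lemma lift_diff_in_lattice: "is_lift F f \<Longrightarrow> proj x = proj y \<Longrightarrow> F x - F y \<in> lattice"
  by (simp add: is_lift_def proj_eq_iff[symmetric])

lemma lift_add_lattice:
  assumes cont: "continuous_on UNIV H" and lift: "is_lift H h" and j: "j \<in> lattice"
  shows "\<exists>l\<in>lattice. \<forall>y. H (y + j) = H y + l"
proof -
  have "continuous_on UNIV (\<lambda>y. H (y + j) - H y)"
    by (intro continuous_on_diff continuous_on_compose2[OF cont] cont continuous_intros) auto
  moreover have "H (y + j) - H y \<in> lattice" for y
    by (rule lift_diff_in_lattice[OF lift]) (simp add: proj_add_lattice j)
  ultimately obtain l where "l \<in> lattice" "\<forall>y. H (y + j) - H y = l"
    using lattice_valued_constant by blast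
  then show ?thesis by (metis add.commute diff_add_cancel)
qed

lemma lift_comp_eq_id:
  assumes F: "continuous_on UNIV F" "is_lift F f" and G: "continuous_on UNIV G" "is_lift G g"
    and inverse: "\<And>p. g (f p) = p"
  shows "\<exists>c\<in>lattice. \<forall>x. G (F x) = x + c"
proof -
  have "continuous_on UNIV (\<lambda>x. G (F x) - x)"
    by (intro continuous_on_diff continuous_on_compose2[OF G(1) F(1)] continuous_on_id) auto
  moreover have "G (F x) - x \<in> lattice" for x
    using F(2) G(2) inverse unfolding is_lift_def by (simp add: proj_eq_iff[symmetric])
  ultimately obtain c where "c \<in> lattice" "\<forall>x. G (F x) - x = c"
    using lattice_valued_constant by blast
  then show ?thesis by (metis add.commute diff_add_cancel)
qed

lemma Diff_continuous_lifts:
  assumes "h \<in> Diff"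
  obtains H K where "continuous_on UNIV H" "is_lift H h" "continuous_on UNIV K" "is_lift K (inv h)"
proof -
  have "continuous_on UNIV F" if "smooth F" for F
    using that pd.simps(1)[of F] unfolding smooth_def by metis
  then show ?thesis using assms that unfolding Diff_def smooth_tmap_def by blast
qed

definition lattice_equivariant :: "(real^2 \<Rightarrow> real^2) \<Rightarrow> bool" where
  "lattice_equivariant F \<longleftrightarrow> (\<forall>x k. k \<in> lattice \<longrightarrow> F (x + k) = F x + k)"

lemma lattice_periodic_bounded:
  fixes p :: "real^2 \<Rightarrow> 'b::metric_space"
  assumes cont: "continuous_on UNIV p" and per: "\<And>x k. k \<in> lattice \<Longrightarrow> p (x + k) = p x"
  shows "bounded (range p)"
proof -
  have "range p \<subseteq> p ` cbox 0 1"
  proof (rule image_subsetI)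
    fix x
    obtain k where "k \<in> lattice" "x - k \<in> cbox 0 1" by (rule lattice_translate_into_unit_cube)
    then show "p x \<in> p ` cbox 0 1" using per[of k "x - k"] by force
  qed
  moreover have "compact (p ` cbox 0 1)"
    by (rule compact_continuous_image) (auto intro: continuous_on_subset[OF cont])
  ultimately show ?thesis by (meson bounded_subset compact_imp_bounded)
qed

lemma lattice_periodic_uniformly_continuous:
  fixes p :: "real^2 \<Rightarrow> 'b::metric_space"
  assumes cont: "continuous_on UNIV p" and per: "\<And>x k. k \<in> lattice \<Longrightarrow> p (x + k) = p x"
  shows "uniformly_continuous_on UNIV p"
  unfolding uniformly_continuous_on_def
proof (intro allI impI)
  fix e :: real assume "e > 0"
  have "uniformly_continuous_on (cball 0 4) p"
    by (rule compact_uniformly_continuous) (auto intro: continuous_on_subset[OF cont])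
  then obtain d where d: "d > 0"
    "\<And>a b. a \<in> cball 0 4 \<Longrightarrow> b \<in> cball 0 4 \<Longrightarrow> dist b a < d \<Longrightarrow> dist (p b) (p a) < e"
    unfolding uniformly_continuous_on_def using \<open>e > 0\<close> by metis
  have "dist (p y) (p x) < e" if xy: "dist y x < min d 1" for x y
  proof -
    obtain k where k: "k \<in> lattice" "x - k \<in> cbox 0 1" by (rule lattice_translate_into_unit_cube)
    have "norm (x - k) \<le> 2" using k(2) by (rule norm_le_2_if_in_unit_cube)
    moreover have "dist (y - k) (x - k) = dist y x" by (simp add: dist_norm)
    moreover have "norm (y - k) \<le> norm (x - k) + dist (y - k) (x - k)"
      by (metis dist_norm norm_triangle_sub add.commute)
    ultimately have "dist (p (y - k)) (p (x - k)) < e"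
      using xy by (intro d(2)) auto
    then show ?thesis using per[OF k(1), of "x - k"] per[OF k(1), of "y - k"] by simp
  qed
  then show "\<exists>d>0. \<forall>x\<in>UNIV. \<forall>y\<in>UNIV. dist y x < d \<longrightarrow> dist (p y) (p x) < e"
    using d(1) by (intro exI[of _ "min d 1"]) auto
qed

lemma equivariant_displacement_bounded:
  assumes "continuous_on UNIV F" "lattice_equivariant F"
  shows "\<exists>C. \<forall>x. norm (F x - x) \<le> C"
proof -
  have "bounded (range (\<lambda>x. F x - x))"
    using assms unfolding lattice_equivariant_def
    by (intro lattice_periodic_bounded continuous_intros) auto
  then show ?thesis by (auto simp: bounded_iff)
qed

lemma equivariant_uniformly_continuous:
  assumes "continuous_on UNIV F" "lattice_equivariant F"
  shows "uniformly_continuous_on UNIV F"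
proof -
  have "uniformly_continuous_on UNIV (\<lambda>x. (F x - x) + x)"
    using assms unfolding lattice_equivariant_def
    by (intro uniformly_continuous_on_add uniformly_continuous_on_id
        lattice_periodic_uniformly_continuous continuous_intros) auto
  then show ?thesis by simp
qed

lemma lift_additivity_defect_bounded:
  assumes cont: "continuous_on UNIV H" and lift: "is_lift H h"
  shows "\<exists>C. \<forall>y u. norm (H (y + u) - H y - H u + H 0) \<le> C"
proof -
  define q where "q z = H (fst z + snd z) - H (fst z) - H (snd z) + H 0" for z
  have "continuous_on UNIV q" unfolding q_def
    by (intro continuous_intros continuous_on_compose2[OF cont]) auto
  then have "compact (q ` (cbox 0 1 \<times> cbox 0 1))"
    by (intro compact_continuous_image compact_Times) (auto intro: continuous_on_subset)
  then obtain C where C: "\<And>y u. y \<in> cbox 0 1 \<Longrightarrow> u \<in> cbox 0 1 \<Longrightarrow> norm (q (y, u)) \<le> C"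
    using compact_imp_bounded bounded_iff by (metis SigmaI image_eqI)
  have q_periodic: "q (y + j, u + k) = q (y, u)" if "j \<in> lattice" "k \<in> lattice" for y u j k
  proof -
    obtain l where l: "\<forall>y. H (y + j) = H y + l" using lift_add_lattice[OF cont lift \<open>j \<in> lattice\<close>] by blast
    obtain l' where l': "\<forall>y. H (y + k) = H y + l'" using lift_add_lattice[OF cont lift \<open>k \<in> lattice\<close>] by blast
    have "H (y + j + (u + k)) = H (y + u) + l + l'"
      using l[rule_format, of "y + u + k"] l'[rule_format, of "y + u"] by (simp add: algebra_simps)
    then show ?thesis unfolding q_def using l l' by simp
  qed
  have "norm (q (y, u)) \<le> C" for y u
  proof -
    obtain j where j: "j \<in> lattice" "y - j \<in> cbox 0 1" by (rule lattice_translate_into_unit_cube)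
    obtain k where k: "k \<in> lattice" "u - k \<in> cbox 0 1" by (rule lattice_translate_into_unit_cube)
    show ?thesis using q_periodic[OF j(1) k(1), of "y - j" "u - k"] C[OF j(2) k(2)] by simp
  qed
  then show ?thesis unfolding q_def by auto
qed

definition near_translation_iterate :: "real \<Rightarrow> ('a::real_normed_vector \<Rightarrow> 'a) \<Rightarrow> bool" where
  "near_translation_iterate e F \<longleftrightarrow> (\<exists>m\<ge>1. \<exists>W. \<forall>x. norm ((F ^^ m) x - x - W) \<le> e * real m)"

lemma funpow_displacement_le:
  fixes F :: "'a::real_normed_vector \<Rightarrow> 'a"
  assumes "\<And>y. norm (F y - y) \<le> C"
  shows "norm ((F ^^ s) y - y) \<le> real s * C"
proof (induction s)
  case (Suc s)
  have "norm ((F ^^ Suc s) y - y) \<le> norm (F ((F ^^ s) y) - (F ^^ s) y) + norm ((F ^^ s) y - y)"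
    using norm_triangle_ineq[of "F ((F ^^ s) y) - (F ^^ s) y" "(F ^^ s) y - y"] by simp
  also have "\<dots> \<le> C + real s * C" using assms Suc by (intro add_mono) auto
  finally show ?case by (simp add: algebra_simps)
qed simp

lemma funpow_mult_displacement_le:
  fixes F :: "'a::real_normed_vector \<Rightarrow> 'a"
  assumes "\<And>x. norm ((F ^^ m) x - x - W) \<le> e"
  shows "norm ((F ^^ (q * m)) x - x - real q *\<^sub>R W) \<le> real q * e"
proof (induction q)
  case (Suc q)
  define y where "y = (F ^^ (q * m)) x"
  have "(F ^^ (Suc q * m)) x - x - real (Suc q) *\<^sub>R W = ((F ^^ m) y - y - W) + (y - x - real q *\<^sub>R W)"
    unfolding y_def by (simp add: funpow_add algebra_simps)
  then have "norm ((F ^^ (Suc q * m)) x - x - real (Suc q) *\<^sub>R W)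
      \<le> norm ((F ^^ m) y - y - W) + norm (y - x - real q *\<^sub>R W)"
    by (metis norm_triangle_ineq)
  also have "\<dots> \<le> e + real q * e" using assms Suc unfolding y_def by (intro add_mono) auto
  finally show ?case by (simp add: algebra_simps)
qed simp

text \<open>Writing \<open>N = q m + s\<close> with \<open>s < m\<close>, the iterate \<open>F\<^sup>N\<close> is within \<open>q e m + s C\<close>
  of the translation by \<open>q W\<close>.\<close>

lemma mean_displacement_near:
  fixes F :: "'a::real_normed_vector \<Rightarrow> 'a"
  assumes C: "\<And>y. norm (F y - y) \<le> C" and near: "near_translation_iterate e F" and e: "e > 0"
  shows "\<exists>w N0. \<forall>N\<ge>N0. \<forall>x. norm ((1 / real N) *\<^sub>R ((F ^^ N) x - x) - w) \<le> 2 * e"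
proof -
  obtain m W where m: "m \<ge> 1" and W: "\<And>x. norm ((F ^^ m) x - x - W) \<le> e * real m"
    using near unfolding near_translation_iterate_def by blast
  have "C \<ge> 0" using C[of 0] by (meson norm_ge_zero order_trans)
  define K where "K = real m * C + norm W"
  have "norm ((1 / real N) *\<^sub>R ((F ^^ N) x - x) - (1 / real m) *\<^sub>R W) \<le> 2 * e"
    if N: "N \<ge> nat \<lceil>K / e\<rceil> + 1" for N x
  proof -
    have "N > 0" using N by simp
    have "K / e \<le> real N" using N real_nat_ceiling_ge[of "K / e"] by linarith
    then have "K \<le> real N * e" using e by (simp add: pos_divide_le_eq)
    define q where "q = N div m"
    define s where "s = N mod m"
    have N_eq: "N = s + q * m" unfolding q_def s_def by simp
    have "s < m" unfolding s_def using m by simp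
    define y where "y = (F ^^ (q * m)) x"
    have "(F ^^ N) x = (F ^^ s) y" unfolding y_def by (subst N_eq) (simp add: funpow_add)
    moreover have "real N / real m = real q + real s / real m"
      using m by (simp add: N_eq field_simps)
    ultimately have decomp: "(F ^^ N) x - x - (real N / real m) *\<^sub>R W
        = ((F ^^ s) y - y) + (y - x - real q *\<^sub>R W) - (real s / real m) *\<^sub>R W"
      by (simp add: algebra_simps)
    have "norm ((F ^^ N) x - x - (real N / real m) *\<^sub>R W)
        \<le> norm ((F ^^ s) y - y) + norm (y - x - real q *\<^sub>R W) + norm ((real s / real m) *\<^sub>R W)"
      unfolding decomp by (intro norm_triangle_le_diff add_right_mono norm_triangle_ineq)
    also have "\<dots> \<le> real s * C + real q * (e * real m) + norm W"
    proof -
      have "norm ((real s / real m) *\<^sub>R W) \<le> norm W"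
        using \<open>s < m\<close> by (simp add: field_simps mult_right_mono)
      then show ?thesis unfolding y_def
        by (intro add_mono funpow_displacement_le funpow_mult_displacement_le C W)
    qed
    also have "\<dots> \<le> K + real N * e"
    proof -
      have "real s * C \<le> real m * C" using \<open>s < m\<close> \<open>C \<ge> 0\<close> by (simp add: mult_right_mono)
      moreover have "real N * e = real s * e + real q * (e * real m)" by (simp add: N_eq algebra_simps)
      moreover have "0 \<le> real s * e" using e by simp
      ultimately show ?thesis unfolding K_def by linarith
    qed
    finally have "norm ((F ^^ N) x - x - (real N / real m) *\<^sub>R W) \<le> 2 * (real N * e)"
      using \<open>K \<le> real N * e\<close> by linarith
    then have "norm ((F ^^ N) x - x - (real N / real m) *\<^sub>R W) / real N \<le> 2 * e"
      using \<open>N > 0\<close> by (simp add: pos_divide_le_eq algebra_simps)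
    moreover have "(1 / real N) *\<^sub>R ((F ^^ N) x - x) - (1 / real m) *\<^sub>R W
        = (1 / real N) *\<^sub>R ((F ^^ N) x - x - (real N / real m) *\<^sub>R W)"
      using \<open>N > 0\<close> by (simp add: algebra_simps)
    ultimately show ?thesis by simp
  qed
  then show ?thesis by blast
qed

lemma uniform_limit_if_near_constants:
  fixes g :: "nat \<Rightarrow> 'a \<Rightarrow> 'b::banach"
  assumes near: "\<And>e. e > 0 \<Longrightarrow> \<exists>w N0. \<forall>N\<ge>N0. \<forall>x. norm (g N x - w) \<le> e"
  shows "\<exists>v. \<forall>e>0. \<exists>N0. \<forall>N\<ge>N0. \<forall>x. norm (g N x - v) \<le> e"
proof -
  define a where "a N = g N undefined" for N
  have "Cauchy a"
  proof (rule metric_CauchyI)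
    fix e :: real assume "e > 0"
    then obtain w N0 where w: "\<forall>N\<ge>N0. \<forall>x. norm (g N x - w) \<le> e/3"
      using near[of "e/3"] by auto
    have "dist (a M) (a N) < e" if "M \<ge> N0" "N \<ge> N0" for M N
    proof -
      have "dist (a M) (a N) \<le> norm (a M - w) + norm (a N - w)"
        unfolding dist_norm using norm_triangle_ineq4[of "a M - w" "a N - w"] by simp
      also have "\<dots> \<le> e/3 + e/3" unfolding a_def using w that by (intro add_mono) auto
      finally show ?thesis using \<open>e > 0\<close> by linarith
    qed
    then show "\<exists>N0. \<forall>M\<ge>N0. \<forall>N\<ge>N0. dist (a M) (a N) < e" by blast
  qed
  then obtain v where "a \<longlonglongrightarrow> v" using Cauchy_convergent convergent_def by blast
  have "\<exists>N0. \<forall>N\<ge>N0. \<forall>x. norm (g N x - v) \<le> e" if "e > 0" for e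
  proof -
    obtain w N0 where w: "\<forall>N\<ge>N0. \<forall>x. norm (g N x - w) \<le> e/2"
      using near[of "e/2"] \<open>e > 0\<close> by auto
    have "(\<lambda>N. norm (a N - w)) \<longlonglongrightarrow> norm (v - w)"
      by (intro tendsto_intros \<open>a \<longlonglongrightarrow> v\<close>)
    then have "norm (v - w) \<le> e/2"
      by (rule Lim_bounded[where M = N0]) (use w in \<open>simp add: a_def\<close>)
    then have "norm (g N x - v) \<le> e" if "N \<ge> N0" for N x
      using norm_triangle_ineq4[of "g N x - w" "v - w"] w[rule_format, OF that, of x] by simp
    then show ?thesis by blast
  qed
  then show ?thesis by blast
qed

lemma mean_displacement_converges_uniformly:
  fixes F :: "'a::banach \<Rightarrow> 'a"
  assumes "\<And>y. norm (F y - y) \<le> C" and "\<And>e. e > 0 \<Longrightarrow> near_translation_iterate e F"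
  shows "\<exists>v. \<forall>e>0. \<exists>N0. \<forall>N\<ge>N0. \<forall>x. norm ((1 / real N) *\<^sub>R ((F ^^ N) x - x) - v) \<le> e"
proof (rule uniform_limit_if_near_constants)
  fix e :: real assume "e > 0"
  then show "\<exists>w N0. \<forall>N\<ge>N0. \<forall>x. norm ((1 / real N) *\<^sub>R ((F ^^ N) x - x) - w) \<le> e"
    using mean_displacement_near[OF assms(1) assms(2)[of "e/2"]] by simp
qed

lemma hausdorff_dist_singleton_tendsto_0:
  assumes ne: "\<And>N. A N \<noteq> {}"
    and conv: "\<And>e. e > 0 \<Longrightarrow> \<exists>N0. \<forall>N\<ge>N0. \<forall>a\<in>A N. dist a v \<le> e"
  shows "(\<lambda>N. hausdorff_dist (A N) {v}) \<longlonglongrightarrow> 0"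
  unfolding LIMSEQ_iff
proof (intro allI impI)
  fix e :: real assume "e > 0"
  then obtain N0 where N0: "\<forall>N\<ge>N0. \<forall>a\<in>A N. dist a v \<le> e/2" using conv[of "e/2"] by auto
  have "\<bar>hausdorff_dist (A N) {v}\<bar> < e" if "N \<ge> N0" for N
  proof -
    have "(SUP a\<in>A N. dist a v) \<le> e/2"
      using N0 that by (intro cSUP_least[OF ne]) auto
    moreover obtain a where "a \<in> A N" using ne by blast
    then have "infdist v (A N) \<le> e/2"
      using infdist_le[of a "A N" v] N0 that by (fastforce simp: dist_commute)
    ultimately show ?thesis
      using infdist_nonneg[of v "A N"] \<open>e > 0\<close> by (simp add: hausdorff_dist_def)
  qed
  then show "\<exists>N0. \<forall>N\<ge>N0. norm (hausdorff_dist (A N) {v} - 0) < e" by auto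
qed

lemma hausdorff_limit_singleton_unique:
  assumes ne: "\<And>N. A N \<noteq> {}"
    and conv: "\<And>e. e > 0 \<Longrightarrow> \<exists>N0. \<forall>N\<ge>N0. \<forall>a\<in>A N. dist a v \<le> e"
    and R: "compact R" "(\<lambda>N. hausdorff_dist (A N) R) \<longlonglongrightarrow> 0" and "r \<in> R"
  shows "r = v"
proof (rule ccontr)
  assume "r \<noteq> v"
  define d where "d = dist r v"
  have "d > 0" unfolding d_def using \<open>r \<noteq> v\<close> by simp
  obtain N0 where N0: "\<forall>N\<ge>N0. \<forall>a\<in>A N. dist a v \<le> d/3"
    using conv[of "d/3"] \<open>d > 0\<close> by auto
  obtain N1 where N1: "\<forall>N\<ge>N1. \<bar>hausdorff_dist (A N) R\<bar> < d/3"
    using R(2)[unfolded LIMSEQ_iff] \<open>d > 0\<close> by (metis diff_zero divide_pos_pos real_norm_def zero_less_numeral)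
  define N where "N = max N0 N1"
  obtain a0 where a0: "a0 \<in> A N" using ne by blast
  obtain B where B: "\<forall>b\<in>R. norm b \<le> B" using compact_imp_bounded[OF R(1)] bounded_iff by metis
  have "bdd_above ((\<lambda>b. infdist b (A N)) ` R)"
  proof (rule bdd_aboveI2)
    fix b assume "b \<in> R"
    have "infdist b (A N) \<le> dist b a0" by (rule infdist_le[OF a0])
    also have "\<dots> \<le> norm b + norm a0" unfolding dist_norm by (rule norm_triangle_ineq4)
    finally show "infdist b (A N) \<le> B + norm a0" using B \<open>b \<in> R\<close> by fastforce
  qed
  then have "infdist r (A N) \<le> (SUP b\<in>R. infdist b (A N))" by (rule cSUP_upper[OF \<open>r \<in> R\<close>])
  also have "\<dots> \<le> hausdorff_dist (A N) R" unfolding hausdorff_dist_def by simp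
  also have "\<dots> < d/3"
    using N1 max.cobounded2[of N1 N0] unfolding N_def by (meson abs_ge_self order_le_less_trans)
  finally have "infdist r (A N) < d/3" .
  moreover have "d - d/3 \<le> infdist r (A N)"
    unfolding infdist_notempty[OF ne]
  proof (rule cINF_greatest[OF ne])
    fix a assume "a \<in> A N"
    then have "dist a v \<le> d/3" using N0 max.cobounded1[of N0 N1] unfolding N_def by blast
    moreover have "d \<le> dist r a + dist a v" unfolding d_def by (rule dist_triangle)
    ultimately show "d - d/3 \<le> dist r a" by linarith
  qed
  ultimately show False using \<open>d > 0\<close> by linarith
qed

lemma rotation_set_eq_singleton:
  assumes conv: "\<And>e. e > 0 \<Longrightarrow> \<exists>N0. \<forall>N\<ge>N0. \<forall>x\<in>fund_dom. dist ((1 / real N) *\<^sub>R (F ^^ N) x) v \<le> e"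
  shows "rotation_set F = {v}"
proof -
  define A where "A N = (\<lambda>x. (1 / real N) *\<^sub>R x) ` ((F ^^ N) ` fund_dom)" for N
  have "0 \<in> fund_dom" by (simp add: fund_dom_def mem_box_cart)
  then have ne: "A N \<noteq> {}" for N unfolding A_def by blast
  have conv_A: "\<exists>N0. \<forall>N\<ge>N0. \<forall>a\<in>A N. dist a v \<le> e" if "e > 0" for e
    using conv[OF that] unfolding A_def by auto
  show ?thesis
    unfolding rotation_set_def A_def[symmetric]
  proof (rule the_equality)
    show "compact {v} \<and> {v} \<noteq> {} \<and> (\<lambda>N. hausdorff_dist (A N) {v}) \<longlonglongrightarrow> 0"
      using hausdorff_dist_singleton_tendsto_0[OF ne conv_A] by simp
    show "R = {v}" if "compact R \<and> R \<noteq> {} \<and> (\<lambda>N. hausdorff_dist (A N) R) \<longlonglongrightarrow> 0" for R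
      using that hausdorff_limit_singleton_unique[OF ne conv_A, of R] by blast
  qed
qed

lemma rotation_set_singleton_if_near_translation_iterates:
  assumes cont: "continuous_on UNIV F" and equiv: "lattice_equivariant F"
    and near: "\<And>e. e > 0 \<Longrightarrow> near_translation_iterate e F"
  shows "\<exists>v. rotation_set F = {v}"
proof -
  obtain C where "\<And>x. norm (F x - x) \<le> C"
    using equivariant_displacement_bounded[OF cont equiv] by blast
  then obtain v where v: "\<forall>e>0. \<exists>N0. \<forall>N\<ge>N0. \<forall>x. norm ((1 / real N) *\<^sub>R ((F ^^ N) x - x) - v) \<le> e"
    using mean_displacement_converges_uniformly near by blast
  have "\<exists>N0. \<forall>N\<ge>N0. \<forall>x\<in>fund_dom. dist ((1 / real N) *\<^sub>R (F ^^ N) x) v \<le> e" if "e > 0" for e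
  proof -
    obtain N0 where N0: "\<forall>N\<ge>N0. \<forall>x. norm ((1 / real N) *\<^sub>R ((F ^^ N) x - x) - v) \<le> e/2"
      using v \<open>e > 0\<close> by (meson half_gt_zero)
    have "dist ((1 / real N) *\<^sub>R (F ^^ N) x) v \<le> e"
      if N: "N \<ge> max N0 (nat \<lceil>4 / e\<rceil>)" and x: "x \<in> fund_dom" for N x
    proof -
      have "4 / e \<le> real N" using N real_nat_ceiling_ge[of "4 / e"] by linarith
      then have "4 \<le> e * real N" using \<open>e > 0\<close> by (simp add: pos_divide_le_eq mult.commute)
      then have "N > 0" by (cases N) auto
      then have "2 / real N \<le> e/2" using \<open>4 \<le> e * real N\<close> by (simp add: field_simps)
      have "norm ((1 / real N) *\<^sub>R x) \<le> 2 / real N"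
        using norm_le_2_if_in_unit_cube[of x] x by (simp add: fund_dom_def divide_right_mono)
      moreover have "dist ((1 / real N) *\<^sub>R (F ^^ N) x) v
          \<le> norm ((1 / real N) *\<^sub>R ((F ^^ N) x - x) - v) + norm ((1 / real N) *\<^sub>R x)"
        unfolding dist_norm by (rule order_trans[OF _ norm_triangle_ineq]) (simp add: algebra_simps)
      moreover have "norm ((1 / real N) *\<^sub>R ((F ^^ N) x - x) - v) \<le> e/2"
        using N0 N by simp
      ultimately show ?thesis using \<open>2 / real N \<le> e/2\<close> by linarith
    qed
    then show ?thesis by blast
  qed
  then show ?thesis using rotation_set_eq_singleton by blast
qed

lemma conjugate_lift_funpow:
  fixes H K :: "'a::ab_group_add \<Rightarrow> 'a"
  assumes KH: "\<And>y. K (H y) = y + c" and "m \<ge> 1"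
  shows "\<exists>u. \<forall>x. ((\<lambda>x. H (K x + \<theta>)) ^^ m) x = H (K x + u)"
  using \<open>m \<ge> 1\<close>
proof (induction m rule: dec_induct)
  case (step m)
  then obtain u where "\<forall>x. ((\<lambda>x. H (K x + \<theta>)) ^^ m) x = H (K x + u)" by blast
  then have "((\<lambda>x. H (K x + \<theta>)) ^^ Suc m) x = H (K x + (u + c + \<theta>))" for x
    by (simp add: KH algebra_simps)
  then show ?case by blast
qed auto

text \<open>With \<open>H\<close>, \<open>K\<close> lifts of \<open>h\<close>, \<open>h\<^sup>-\<^sup>1\<close>, every iterate of the lift \<open>H (K x + \<theta>)\<close>
  has the form \<open>H (K x + u)\<close>, which differs from \<open>x + H u - H 0\<close> (up to a lattice vector)
  by the bounded additivity defect of \<open>H\<close>.\<close>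

lemma conjugate_rotation_lift:
  assumes "h \<in> Diff"
  obtains G C where "continuous_on UNIV G" "is_lift G (h \<circ> rot \<theta> \<circ> inv h)" "lattice_equivariant G"
    "\<forall>m\<ge>1. \<exists>W. \<forall>x. norm ((G ^^ m) x - x - W) \<le> C"
proof -
  obtain H K where H: "continuous_on UNIV H" "is_lift H h"
    and K: "continuous_on UNIV K" "is_lift K (inv h)"
    using Diff_continuous_lifts[OF assms] by blast
  have "bij h" using assms unfolding Diff_def by simp
  then have "inv h (h p) = p" "h (inv h p) = p" for p
    by (simp_all add: bij_is_inj bij_is_surj surj_f_inv_f)
  then obtain c c' where KH: "\<And>y. K (H y) = y + c" and HK: "\<And>x. H (K x) = x + c'"
    using lift_comp_eq_id[OF H K] lift_comp_eq_id[OF K H] by metis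
  define G where "G x = H (K x + \<theta>)" for x
  have "continuous_on UNIV G" unfolding G_def
    by (intro continuous_on_compose2[OF H(1)] continuous_intros K(1)) auto
  moreover have "is_lift G (h \<circ> rot \<theta> \<circ> inv h)"
    using H(2) K(2) unfolding is_lift_def G_def by (simp add: rot_proj[symmetric])
  moreover have "lattice_equivariant G"
    unfolding lattice_equivariant_def
  proof (intro allI impI)
    fix x k assume "k \<in> lattice"
    obtain l where l: "l \<in> lattice" "\<forall>y. K (y + k) = K y + l"
      using lift_add_lattice[OF K \<open>k \<in> lattice\<close>] by blast
    obtain l' where l': "\<forall>y. H (y + l) = H y + l'"
      using lift_add_lattice[OF H l(1)] by blast
    have "x + k + c' = x + c' + l'"
      using HK[of "x + k"] HK[of x] l(2) l' by simp
    then have "l' = k" by simp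
    have "G (x + k) = H ((K x + \<theta>) + l)" unfolding G_def using l(2)[rule_format, of x] by (simp add: algebra_simps)
    also have "\<dots> = G x + k" unfolding G_def using l' \<open>l' = k\<close> by simp
    finally show "G (x + k) = G x + k" .
  qed
  moreover obtain C where C: "\<And>y u. norm (H (y + u) - H y - H u + H 0) \<le> C"
    using lift_additivity_defect_bounded[OF H] by blast
  have "\<exists>W. \<forall>x. norm ((G ^^ m) x - x - W) \<le> C" if m: "m \<ge> 1" for m
  proof -
    obtain u where u: "\<And>x. (G ^^ m) x = H (K x + u)"
      using conjugate_lift_funpow[where H = H and K = K and \<theta> = \<theta>, OF KH m] unfolding G_def[abs_def] by blast
    have "(G ^^ m) x - x - (c' + H u - H 0) = H (K x + u) - H (K x) - H u + H 0" for x
      using u[of x] HK[of x] by (simp add: algebra_simps)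
    then show ?thesis using C by metis
  qed
  ultimately show ?thesis using that by blast
qed

lemma tdist_set_nonempty: "{norm (x - y) | x y. proj x = p \<and> proj y = q} \<noteq> {}"
  using proj_Rep_torus by blast

lemma tdist_less:
  assumes "tdist p q < r"
  obtains x y where "proj x = p" "proj y = q" "norm (x - y) < r"
  using cInf_lessD[OF tdist_set_nonempty assms[unfolded tdist_def]] by blast

lemma tdist_le_norm: "proj x = p \<Longrightarrow> proj y = q \<Longrightarrow> tdist p q \<le> norm (x - y)"
  unfolding tdist_def by (rule cInf_lower) (auto intro!: bdd_belowI[of _ 0])

lemma tdist_nonneg: "0 \<le> tdist p q"
  unfolding tdist_def by (rule cInf_greatest[OF tdist_set_nonempty]) auto

lemma tdist_self: "tdist p p = 0"
  using tdist_le_norm[OF proj_Rep_torus proj_Rep_torus, of p p] tdist_nonneg[of p p] by simp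

lemma tdist_le_4: "tdist p q \<le> 4"
proof -
  have "tdist p q \<le> norm (Rep_torus p - Rep_torus q)"
    by (intro tdist_le_norm proj_Rep_torus)
  also have "\<dots> \<le> norm (Rep_torus p) + norm (Rep_torus q)" by (rule norm_triangle_ineq4)
  also have "\<dots> \<le> 4"
  proof -
    have "Rep_torus p' \<in> cbox 0 1" for p'
      using Rep_torus[of p'] by (simp add: mem_box_cart less_imp_le)
    then show ?thesis
      using norm_le_2_if_in_unit_cube[of "Rep_torus p"] norm_le_2_if_in_unit_cube[of "Rep_torus q"]
      by simp
  qed
  finally show ?thesis .
qed

lemma tdist_triangle: "tdist a c \<le> tdist a b + tdist b c"
proof (rule field_le_epsilon)
  fix \<epsilon> :: real assume "\<epsilon> > 0"
  obtain x y where xy: "proj x = a" "proj y = b" "norm (x - y) < tdist a b + \<epsilon>/2"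
    using tdist_less[of a b "tdist a b + \<epsilon>/2"] \<open>\<epsilon> > 0\<close> by auto
  obtain y' z where yz: "proj y' = b" "proj z = c" "norm (y' - z) < tdist b c + \<epsilon>/2"
    using tdist_less[of b c "tdist b c + \<epsilon>/2"] \<open>\<epsilon> > 0\<close> by auto
  have "proj (z + (y - y')) = c" using xy(2) yz(1,2) by (simp add: proj_add_lattice proj_eq_iff[symmetric])
  then have "tdist a c \<le> norm (x - (z + (y - y')))"
    by (rule tdist_le_norm[OF xy(1)])
  also have "x - (z + (y - y')) = (x - y) + (y' - z)" by (simp add: algebra_simps)
  also have "norm (x - y + (y' - z)) \<le> norm (x - y) + norm (y' - z)" by (rule norm_triangle_ineq)
  finally show "tdist a c \<le> tdist a b + tdist b c + \<epsilon>" using xy(3) yz(3) by linarith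
qed

definition C0_dist :: "(torus \<Rightarrow> torus) \<Rightarrow> (torus \<Rightarrow> torus) \<Rightarrow> real" where
  "C0_dist f g = Sup (range (\<lambda>p. tdist (f p) (g p)))"

lemma tdist_le_C0_dist: "tdist (f p) (g p) \<le> C0_dist f g"
  unfolding C0_dist_def by (rule cSUP_upper) (auto intro: bdd_aboveI2 tdist_le_4)

lemma C0_dist_self: "C0_dist f f = 0"
  by (simp add: C0_dist_def tdist_self)

lemma C0_dist_triangle: "C0_dist f h \<le> C0_dist f g + C0_dist g h"
  unfolding C0_dist_def[of f h]
proof (rule cSUP_least)
  fix p
  have "tdist (f p) (h p) \<le> tdist (f p) (g p) + tdist (g p) (h p)" by (rule tdist_triangle)
  also have "\<dots> \<le> C0_dist f g + C0_dist g h" by (intro add_mono tdist_le_C0_dist)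
  finally show "tdist (f p) (h p) \<le> C0_dist f g + C0_dist g h" .
qed simp

lemma C0_dist_le_dinf: "min 1 (C0_dist f g) \<le> dinf f g"
proof -
  have "C0_dist f g \<le> dk k f g" for k
  proof -
    define D where "D = {Sup (range (\<lambda>x. norm (pd ds (lift f) x - pd ds (lift g) x))) | ds.
        1 \<le> length ds \<and> length ds \<le> k}"
    have "D \<subseteq> (\<lambda>ds. Sup (range (\<lambda>x. norm (pd ds (lift f) x - pd ds (lift g) x)))) `
        {ds. set ds \<subseteq> UNIV \<and> length ds \<le> k}"
      unfolding D_def by auto
    moreover have "finite {ds :: 2 list. set ds \<subseteq> UNIV \<and> length ds \<le> k}"
      by (rule finite_lists_length_le) simp
    ultimately have "finite D" by (meson finite_imageI finite_subset)
    then show ?thesis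
      unfolding dk_def C0_dist_def[symmetric] D_def[symmetric] by (intro cSup_upper bdd_above_finite) auto
  qed
  then have dCk: "C0_dist f g \<le> dCk k f g" for k
    unfolding dCk_def by (meson max.coboundedI1)
  have "0 \<le> C0_dist f g" using tdist_le_C0_dist[of f _ g] tdist_nonneg by (meson order_trans)
  define t where "t k = (1/2::real) ^ k * min 1 (dCk k f g)" for k
  have t: "0 \<le> t k" "t k \<le> (1/2) ^ k" for k
    unfolding t_def using dCk[of k] \<open>0 \<le> C0_dist f g\<close> by (auto simp: mult_left_le)
  then have "summable t"
    by (intro summable_comparison_test[OF _ summable_geometric[of "1/2::real"]]) auto
  then have "t 0 \<le> dinf f g"
    unfolding dinf_def t_def[symmetric] using sum_le_suminf[of t "{0}"] t(1) by simp
  then show ?thesis unfolding t_def using dCk[of 0] by simp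
qed

lemma openin_Diff_top: "openin Diff_top U \<longleftrightarrow> dinf_open U"
  unfolding Diff_top_def by (simp add: istopology_dinf_open)

lemma topspace_Diff_top: "topspace Diff_top = Diff"
proof -
  have "dinf_open Diff" unfolding dinf_open_def by (auto intro: exI[of _ 1])
  then show ?thesis
    unfolding topspace_def openin_Diff_top dinf_open_def by blast
qed

lemma openin_C0_ball: "openin Diff_top {f \<in> Diff. C0_dist g f < r}"
  unfolding openin_Diff_top dinf_open_def
proof (intro conjI ballI)
  fix f assume f: "f \<in> {f \<in> Diff. C0_dist g f < r}"
  define s where "s = min (r - C0_dist g f) 1"
  have "C0_dist g f' < r" if "dinf f f' < s" for f'
  proof -
    have "min 1 (C0_dist f f') < s" using C0_dist_le_dinf[of f f'] that by linarith
    then have "C0_dist f f' < r - C0_dist g f" unfolding s_def by linarith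
    then show ?thesis using C0_dist_triangle[of g f' f] by linarith
  qed
  moreover have "s > 0" using f unfolding s_def by simp
  ultimately show "\<exists>s>0. \<forall>f'\<in>Diff. dinf f f' < s \<longrightarrow> f' \<in> {f \<in> Diff. C0_dist g f < r}"
    by blast
qed auto

definition iterate_near_rotation :: "real \<Rightarrow> (torus \<Rightarrow> torus) \<Rightarrow> bool" where
  "iterate_near_rotation e f \<longleftrightarrow> (\<forall>F. continuous_on UNIV F \<and> is_lift F f \<longrightarrow>
     lattice_equivariant F \<and> near_translation_iterate e F)"

lemma funpow_uniformly_close:
  fixes G :: "'a::metric_space \<Rightarrow> 'a"
  assumes uc: "uniformly_continuous_on UNIV G" and "\<tau> > 0"
  shows "\<exists>\<eta>>0. \<forall>F. (\<forall>x. dist (F x) (G x) \<le> \<eta>) \<longrightarrow> (\<forall>x. dist ((F ^^ m) x) ((G ^^ m) x) \<le> \<tau>)"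
  using \<open>\<tau> > 0\<close>
proof (induction m arbitrary: \<tau>)
  case 0
  then show ?case by (intro exI[of _ 1]) auto
next
  case (Suc m)
  obtain \<delta> where \<delta>: "\<delta> > 0" "\<And>x y. dist x y < \<delta> \<Longrightarrow> dist (G x) (G y) < \<tau>/2"
    using uc Suc.prems unfolding uniformly_continuous_on_def by (metis UNIV_I half_gt_zero)
  obtain \<eta> where \<eta>: "\<eta> > 0"
    "\<And>F. \<forall>x. dist (F x) (G x) \<le> \<eta> \<Longrightarrow> \<forall>x. dist ((F ^^ m) x) ((G ^^ m) x) \<le> \<delta>/2"
    using Suc.IH[of "\<delta>/2"] \<delta>(1) by auto
  have "dist ((F ^^ Suc m) x) ((G ^^ Suc m) x) \<le> \<tau>"
    if F: "\<forall>x. dist (F x) (G x) \<le> min \<eta> (\<tau>/2)" for F x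
  proof -
    let ?y = "(F ^^ m) x" and ?z = "(G ^^ m) x"
    have "\<forall>x. dist (F x) (G x) \<le> \<eta>" using F by (meson min.boundedE)
    then have "dist ?y ?z \<le> \<delta>/2" using \<eta>(2)[of F] by blast
    then have "dist ?y ?z < \<delta>" using \<delta>(1) by linarith
    then have "dist (G ?y) (G ?z) < \<tau>/2" by (rule \<delta>(2))
    moreover have "dist (F ?y) (G ?y) \<le> \<tau>/2" using F by simp
    ultimately show ?thesis using dist_triangle[of "F ?y" "G ?z" "G ?y"] by simp
  qed
  then show ?case using \<eta>(1) Suc.prems by (intro exI[of _ "min \<eta> (\<tau>/2)"]) auto
qed

lemma funpow_diff_lattice:
  assumes "lattice_equivariant F" and "c \<in> lattice"
  shows "((\<lambda>z. F z - c) ^^ n) x = (F ^^ n) x - real n *\<^sub>R c"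
proof (induction n)
  case (Suc n)
  have "- (real n *\<^sub>R c) \<in> lattice" using assms(2) by blast
  then have "F ((F ^^ n) x + - (real n *\<^sub>R c)) = F ((F ^^ n) x) + - (real n *\<^sub>R c)"
    using assms(1) unfolding lattice_equivariant_def by blast
  moreover have "((\<lambda>z. F z - c) ^^ Suc n) x = F ((F ^^ n) x + - (real n *\<^sub>R c)) - c"
    using Suc by simp
  ultimately show ?case by (simp add: algebra_simps)
qed simp

lemma lifts_C0_close:
  assumes G: "continuous_on UNIV G" "is_lift G g" and F: "continuous_on UNIV F" "is_lift F f"
    and close: "\<And>p. tdist (g p) (f p) < r" and "r \<le> 1/2"
  shows "\<exists>c\<in>lattice. \<forall>z. norm (F z - c - G z) < r"
proof -
  have "\<exists>k\<in>lattice. norm ((F z - G z) - k) < r" for z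
  proof -
    obtain x y where xy: "proj x = g (proj z)" "proj y = f (proj z)" "norm (x - y) < r"
      using tdist_less[OF close[of "proj z"]] by blast
    then have "F z - y \<in> lattice" "G z - x \<in> lattice"
      using F(2) G(2) unfolding is_lift_def by (simp_all add: proj_eq_iff[symmetric])
    then have "(F z - y) - (G z - x) \<in> lattice" by blast
    moreover have "norm ((F z - G z) - ((F z - y) - (G z - x))) < r"
      using xy(3) by (simp add: norm_minus_commute algebra_simps)
    ultimately show ?thesis by blast
  qed
  then obtain c where "c \<in> lattice" "\<forall>z. norm ((F z - G z) - c) < r"
    using lattice_near_constant[of "\<lambda>z. F z - G z" r] F(1) G(1) \<open>r \<le> 1/2\<close>
    by (auto intro: continuous_on_diff)
  then show ?thesis by (auto simp: algebra_simps)
qed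

lemma lattice_equivariant_if_close:
  assumes "lattice_equivariant G" "is_lift F f" and close: "\<And>z. norm (F z - c - G z) < 1/2"
  shows "lattice_equivariant F"
  unfolding lattice_equivariant_def
proof (intro allI impI)
  fix x k assume "k \<in> lattice"
  have "F (x + k) - F x - k \<in> lattice"
    using assms(2) \<open>k \<in> lattice\<close> by (intro lattice_diff lift_diff_in_lattice) (auto simp: proj_add_lattice)
  moreover have "G (x + k) = G x + k"
    using assms(1) \<open>k \<in> lattice\<close> unfolding lattice_equivariant_def by blast
  then have "F (x + k) - F x - k = (F (x + k) - c - G (x + k)) - (F x - c - G x)"
    by (simp add: algebra_simps)
  then have "norm (F (x + k) - F x - k) \<le> norm (F (x + k) - c - G (x + k)) + norm (F x - c - G x)"
    by (metis norm_triangle_ineq4)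
  then have "norm (F (x + k) - F x - k) < 1"
    using close[of x] close[of "x + k"] by linarith
  ultimately have "F (x + k) - F x - k = 0" by (rule lattice_norm_less_1_eq_0)
  then show "F (x + k) = F x + k" by (simp add: algebra_simps)
qed

text \<open>The drift bound \<open>C\<close> of \<open>G\<close> is uniform in \<open>m\<close>, so it becomes negligible
  against \<open>e m\<close> for one large \<open>m\<close>; for that single \<open>m\<close>, \<open>F\<^sup>m\<close> stays close to \<open>G\<^sup>m\<close>
  when \<open>F\<close> is close to \<open>G\<close>.\<close>

lemma iterate_near_rotation_C0_close_to_bounded_drift:
  assumes G: "continuous_on UNIV G" "is_lift G g" "lattice_equivariant G"
    and drift: "\<forall>m\<ge>1. \<exists>W. \<forall>x. norm ((G ^^ m) x - x - W) \<le> C" and "e > 0"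
  shows "\<exists>r>0. \<forall>f. (\<forall>p. tdist (g p) (f p) < r) \<longrightarrow> iterate_near_rotation e f"
proof -
  define m where "m = nat \<lceil>2 * C / e\<rceil> + 1"
  have "m \<ge> 1" unfolding m_def by simp
  have "2 * C / e \<le> real m" unfolding m_def by linarith
  then have C_le: "C \<le> e * real m / 2" using \<open>e > 0\<close> by (simp add: field_simps)
  obtain W where W: "\<And>x. norm ((G ^^ m) x - x - W) \<le> C" using drift \<open>m \<ge> 1\<close> by blast
  have "e * real m / 2 > 0" using \<open>e > 0\<close> \<open>m \<ge> 1\<close> by simp
  then obtain \<eta> where "\<eta> > 0" and \<eta>:
    "\<And>F. \<forall>x. dist (F x) (G x) \<le> \<eta> \<Longrightarrow> \<forall>x. dist ((F ^^ m) x) ((G ^^ m) x) \<le> e * real m / 2"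
    using funpow_uniformly_close[OF equivariant_uniformly_continuous[OF G(1) G(3)]] by blast
  define r where "r = min \<eta> (1/2)"
  have "iterate_near_rotation e f" if close: "\<forall>p. tdist (g p) (f p) < r" for f
    unfolding iterate_near_rotation_def
  proof (intro allI impI)
    fix F assume F: "continuous_on UNIV F \<and> is_lift F f"
    obtain c where "c \<in> lattice" and c: "\<And>z. norm (F z - c - G z) < r"
      using lifts_C0_close[OF G(1,2)] F close by (metis r_def min.cobounded2)
    have "lattice_equivariant F"
      using lattice_equivariant_if_close[OF G(3)] F c unfolding r_def
      by (meson min.strict_boundedE)
    have "dist (F z - c) (G z) \<le> \<eta>" for z
      using c[of z] unfolding r_def dist_norm by linarith
    then have close_m: "norm ((F ^^ m) x - real m *\<^sub>R c - (G ^^ m) x) \<le> e * real m / 2" for x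
      using \<eta>[of "\<lambda>z. F z - c"] funpow_diff_lattice[OF \<open>lattice_equivariant F\<close> \<open>c \<in> lattice\<close>]
      by (simp add: dist_norm)
    have "norm ((F ^^ m) x - x - (W + real m *\<^sub>R c)) \<le> e * real m" for x
    proof -
      have "(F ^^ m) x - x - (W + real m *\<^sub>R c)
          = ((F ^^ m) x - real m *\<^sub>R c - (G ^^ m) x) + ((G ^^ m) x - x - W)"
        by (simp add: algebra_simps)
      then have "norm ((F ^^ m) x - x - (W + real m *\<^sub>R c))
          \<le> norm ((F ^^ m) x - real m *\<^sub>R c - (G ^^ m) x) + norm ((G ^^ m) x - x - W)"
        by (metis norm_triangle_ineq)
      then show ?thesis using close_m[of x] W[of x] C_le by linarith
    qed
    then show "lattice_equivariant F \<and> near_translation_iterate e F"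
      unfolding near_translation_iterate_def using \<open>lattice_equivariant F\<close> \<open>m \<ge> 1\<close> by blast
  qed
  moreover have "r > 0" unfolding r_def using \<open>\<eta> > 0\<close> by simp
  ultimately show ?thesis by blast
qed

lemma generic_in_closure_of:
  fixes P :: "nat \<Rightarrow> 'a set"
  assumes interior: "\<And>n. topspace X \<inter> S \<subseteq> X interior_of P n"
    and limit: "\<And>x. x \<in> X closure_of S \<Longrightarrow> \<forall>n. x \<in> P n \<Longrightarrow> Q x"
  shows "generic_in (subtopology X (X closure_of S)) Q"
proof -
  define T where "T = X closure_of S"
  define U where "U n = T \<inter> X interior_of P n" for n
  have U_open: "openin (subtopology X T) (U n)" for n
  proof -
    have "openin (subtopology X T) (X interior_of P n \<inter> T)"
      by (rule openin_subtopology_Int[OF openin_interior_of])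
    then show ?thesis unfolding U_def by (simp add: Int_commute)
  qed
  have U_dense: "subtopology X T closure_of U n = topspace (subtopology X T)" for n
  proof -
    have "topspace X \<inter> S \<subseteq> X closure_of (topspace X \<inter> S)"
      by (rule closure_of_subset) blast
    then have "topspace X \<inter> S \<subseteq> T"
      unfolding T_def using closure_of_restrict[of X S] by simp
    then have "topspace X \<inter> S \<subseteq> U n"
      using interior[of n] unfolding U_def by blast
    then have "X closure_of (topspace X \<inter> S) \<subseteq> X closure_of U n"
      by (rule closure_of_mono)
    then have "T \<subseteq> X closure_of U n"
      unfolding T_def using closure_of_restrict[of X S] by simp
    moreover have "subtopology X T closure_of U n = T \<inter> X closure_of (T \<inter> U n)"
      by (rule closure_of_subtopology)
    moreover have "T \<inter> U n = U n" unfolding U_def by blast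
    moreover have "topspace (subtopology X T) = T"
      using closure_of_subset_topspace[of X S] unfolding T_def by auto
    ultimately show ?thesis by auto
  qed
  have U_Inter: "(\<Inter>n. U n) \<subseteq> {x. Q x}"
  proof
    fix x assume x: "x \<in> (\<Inter>n. U n)"
    have "x \<in> P n" for n
      using x interior_of_subset[of X "P n"] unfolding U_def by blast
    moreover have "x \<in> T" using x unfolding U_def by blast
    ultimately show "x \<in> {x. Q x}" using limit unfolding T_def by blast
  qed
  show ?thesis
    unfolding generic_in_def T_def[symmetric] using U_open U_dense U_Inter by blast
qed

lemma conjugate_in_interior_iterate_near_rotation:
  assumes "h \<in> Diff" and g: "g = h \<circ> rot \<theta> \<circ> inv h" "g \<in> Diff" and "e > 0"
  shows "g \<in> Diff_top interior_of {f. iterate_near_rotation e f}"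
proof -
  obtain G C where G: "continuous_on UNIV G" "is_lift G (h \<circ> rot \<theta> \<circ> inv h)" "lattice_equivariant G"
    "\<forall>m\<ge>1. \<exists>W. \<forall>x. norm ((G ^^ m) x - x - W) \<le> C"
    by (rule conjugate_rotation_lift[OF \<open>h \<in> Diff\<close>, where \<theta> = \<theta>])
  obtain r where "r > 0" and r: "\<forall>f. (\<forall>p. tdist (g p) (f p) < r) \<longrightarrow> iterate_near_rotation e f"
    using iterate_near_rotation_C0_close_to_bounded_drift[OF G(1) _ G(3) G(4) \<open>e > 0\<close>] G(2) g(1)
    by blast
  have "{f \<in> Diff. C0_dist g f < r} \<subseteq> {f. iterate_near_rotation e f}"
  proof safe
    fix f assume "C0_dist g f < r"
    then have "\<forall>p. tdist (g p) (f p) < r" using tdist_le_C0_dist[of g _ f] by (meson le_less_trans)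
    then show "iterate_near_rotation e f" using r by blast
  qed
  then have "{f \<in> Diff. C0_dist g f < r} \<subseteq> Diff_top interior_of {f. iterate_near_rotation e f}"
    by (rule interior_of_maximal[OF _ openin_C0_ball])
  moreover have "g \<in> {f \<in> Diff. C0_dist g f < r}"
    using g(2) \<open>r > 0\<close> by (simp add: C0_dist_self)
  ultimately show ?thesis by blast
qed

lemma iterate_near_rotation_mono:
  assumes "iterate_near_rotation e f" "e \<le> e'"
  shows "iterate_near_rotation e' f"
proof -
  have "near_translation_iterate e' F" if near: "near_translation_iterate e F" for F :: "real^2 \<Rightarrow> real^2"
  proof -
    obtain m W where "m \<ge> 1" "\<forall>x. norm ((F ^^ m) x - x - W) \<le> e * real m"
      using near unfolding near_translation_iterate_def by blast
    moreover have "e * real m \<le> e' * real m" using \<open>e \<le> e'\<close> by (simp add: mult_right_mono)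
    ultimately show ?thesis unfolding near_translation_iterate_def by (meson order_trans)
  qed
  then show ?thesis using assms(1) unfolding iterate_near_rotation_def by blast
qed

lemma pseudo_rotation_if_iterate_near_rotation:
  assumes "f \<in> Diff" and near: "\<And>e. e > 0 \<Longrightarrow> iterate_near_rotation e f"
  shows "pseudo_rotation f"
proof -
  obtain F where F: "continuous_on UNIV F" "is_lift F f"
    using Diff_continuous_lifts[OF \<open>f \<in> Diff\<close>] by metis
  then have "lattice_equivariant F" and near_F: "\<And>e. e > 0 \<Longrightarrow> near_translation_iterate e F"
    using near[of 1] near unfolding iterate_near_rotation_def by auto
  then obtain v where "rotation_set F = {v}"
    using rotation_set_singleton_if_near_translation_iterates[OF F(1)] by blast
  moreover have "bij f" using \<open>f \<in> Diff\<close> unfolding Diff_def by simp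
  ultimately show ?thesis
    unfolding pseudo_rotation_def using F \<open>lattice_equivariant F\<close>
    unfolding lattice_equivariant_def by blast
qed

lemma generic_pseudo_rotation_closure_of_conjugates:
  assumes "S \<subseteq> Diff"
  shows "generic_in (subtopology Diff_top (Diff_top closure_of {h \<circ> rot \<theta> \<circ> inv h | h \<theta>. h \<in> S}))
    pseudo_rotation"
proof (rule generic_in_closure_of[where P = "\<lambda>n. {f. iterate_near_rotation (1 / Suc n) f}"])
  fix n
  show "topspace Diff_top \<inter> {h \<circ> rot \<theta> \<circ> inv h | h \<theta>. h \<in> S}
      \<subseteq> Diff_top interior_of {f. iterate_near_rotation (1 / Suc n) f}"
  proof
    fix g assume g: "g \<in> topspace Diff_top \<inter> {h \<circ> rot \<theta> \<circ> inv h | h \<theta>. h \<in> S}"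
    then have "g \<in> Diff" by (simp add: topspace_Diff_top)
    obtain h \<theta> where "h \<in> S" "g = h \<circ> rot \<theta> \<circ> inv h" using g by blast
    moreover have "(1 :: real) / Suc n > 0" by simp
    ultimately show "g \<in> Diff_top interior_of {f. iterate_near_rotation (1 / Suc n) f}"
      using assms \<open>g \<in> Diff\<close>
      by (intro conjugate_in_interior_iterate_near_rotation[where h = h and \<theta> = \<theta>]) auto
  qed
next
  fix f assume f: "f \<in> Diff_top closure_of {h \<circ> rot \<theta> \<circ> inv h | h \<theta>. h \<in> S}"
    and near: "\<forall>n. f \<in> {f. iterate_near_rotation (1 / Suc n) f}"
  have "f \<in> Diff" using closure_of_subset_topspace[of Diff_top] f unfolding topspace_Diff_top by blast
  moreover have "iterate_near_rotation e f" if "e > 0" for e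
  proof -
    obtain n where "inverse (real (Suc n)) < e" using reals_Archimedean[OF \<open>e > 0\<close>] by blast
    then have "1 / real (Suc n) \<le> e" by (simp add: inverse_eq_divide)
    moreover have "iterate_near_rotation (1 / Suc n) f" using near by blast
    ultimately show ?thesis using iterate_near_rotation_mono by blast
  qed
  ultimately show "pseudo_rotation f" by (rule pseudo_rotation_if_iterate_near_rotation)
qed

theorem mainTheorem3:
  shows "generic_in (subtopology Diff_top O_closure) pseudo_rotation \<and>
         generic_in (subtopology Diff_top O_mu_closure) pseudo_rotation"
proof -
  have "Diff_mu \<subseteq> Diff" unfolding Diff_mu_def by blast
  then show ?thesis
    unfolding O_closure_def O_mu_closure_def
    using generic_pseudo_rotation_closure_of_conjugates[OF order_refl]
      generic_pseudo_rotation_closure_of_conjugates[of Diff_mu] by simp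
qed

end
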